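(* Let $h,g:\mathbb{Z}^2\to\mathbb{C}$ and $\alpha\in\mathbb{C}$. For $f=f(n,m)$ write $\widetilde f=f(n+1,m)$, $\widehat f=f(n,m+1)$, $\widetilde{\widetilde f}=f(n+2,m)$, etc. Consider, for a spectral parameter $p\in\mathbb{C}$, the linear system for $\varphi:\mathbb{Z}^2\to\mathbb{C}$ $$\widetilde{\widetilde{\varphi}}+h\,\widetilde{\varphi}+\alpha^2\varphi=p^2\varphi,\qquad \widehat{\varphi}=\widetilde{\varphi}-g\,\varphi .$$ Suppose this system is compatible for all $p$, i.e. the two values of $\varphi(n+2,m+1)$ obtained by computing $\widehat{\widetilde{\widetilde{\varphi}}}$ and $\widetilde{\widetilde{\widehat{\varphi}}}$ via the system coincide identically in the free data $\varphi(n,m),\varphi(n+1,m)$. Then $$\widehat{h}-\widetilde{h}=\widetilde{\widetilde{g}}-g,$$ and $(h+\widetilde g)\,g$ is invariant under the shift $n\mapsto n+1$, so that after one summation in the $n$-direction $(h+\widetilde{g})\,g=\beta^2-\alpha^2$, where $\beta^2-\alpha^2$ is the constant of integration. Moreover, if $(h+\widetilde g)g=\beta^2-\alpha^2$ with $\beta$ a constant, then every solution $\varphi$ of the system satisfies $$\widehat{\widehat{\varphi}}+\eta\,\widehat{\varphi}+\beta^2\varphi=p^2\varphi,\qquad \eta=h+\widetilde{g}+\widehat{g}.$$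
   Context: Shift notation: for a function $f$ on $\mathbb{Z}^2$, $\widetilde f(n,m)=f(n+1,m)$ and $\widehat f(n,m)=f(n,m+1)$; combined accents denote composed shifts. *)

theory Defs
  imports Complex_Main
begin

text \<open>Functions on Z^2 are modelled as int \<Rightarrow> int \<Rightarrow> complex, f n m = f(n,m).
  Tilde shift: n \<mapsto> n+1; hat shift: m \<mapsto> m+1.\<close>

text \<open>Value of phi(n+2,m) given x = phi(n,m), y = phi(n+1,m), from the first equation
  phi~~ + h phi~ + alpha^2 phi = p^2 phi.\<close>
definition step_nn :: "(int \<Rightarrow> int \<Rightarrow> complex) \<Rightarrow> complex \<Rightarrow> complex \<Rightarrow> int \<Rightarrow> int \<Rightarrow> complex \<Rightarrow> complex \<Rightarrow> complex" where
  "step_nn h \<alpha> p n m x y = (p\<^sup>2 - \<alpha>\<^sup>2) * x - h n m * y"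

text \<open>Value of phi(n,m+1) given x = phi(n,m), y = phi(n+1,m), from phi^ = phi~ - g phi.\<close>
definition step_hat :: "(int \<Rightarrow> int \<Rightarrow> complex) \<Rightarrow> int \<Rightarrow> int \<Rightarrow> complex \<Rightarrow> complex \<Rightarrow> complex" where
  "step_hat g n m x y = y - g n m * x"

text \<open>phi(n+2,m+1) computed as the hat-shift of phi~~ (via the system), in terms of the free data.\<close>
definition hat_of_tt :: "(int \<Rightarrow> int \<Rightarrow> complex) \<Rightarrow> (int \<Rightarrow> int \<Rightarrow> complex) \<Rightarrow> complex \<Rightarrow> complex \<Rightarrow> int \<Rightarrow> int \<Rightarrow> complex \<Rightarrow> complex \<Rightarrow> complex" where
  "hat_of_tt h g \<alpha> p n m x y =
     step_nn h \<alpha> p n (m + 1) (step_hat g n m x y)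
        (step_hat g (n + 1) m y (step_nn h \<alpha> p n m x y))"

text \<open>phi(n+2,m+1) computed as the double tilde-shift of phi^ (via the system).\<close>
definition tt_of_hat :: "(int \<Rightarrow> int \<Rightarrow> complex) \<Rightarrow> (int \<Rightarrow> int \<Rightarrow> complex) \<Rightarrow> complex \<Rightarrow> complex \<Rightarrow> int \<Rightarrow> int \<Rightarrow> complex \<Rightarrow> complex \<Rightarrow> complex" where
  "tt_of_hat h g \<alpha> p n m x y =
     (let z = step_nn h \<alpha> p n m x y in
      step_hat g (n + 2) m z (step_nn h \<alpha> p (n + 1) m y z))"

definition compatible :: "(int \<Rightarrow> int \<Rightarrow> complex) \<Rightarrow> (int \<Rightarrow> int \<Rightarrow> complex) \<Rightarrow> complex \<Rightarrow> bool" where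
  "compatible h g \<alpha> \<longleftrightarrow>
     (\<forall>p n m x y. hat_of_tt h g \<alpha> p n m x y = tt_of_hat h g \<alpha> p n m x y)"

definition solves :: "(int \<Rightarrow> int \<Rightarrow> complex) \<Rightarrow> (int \<Rightarrow> int \<Rightarrow> complex) \<Rightarrow> complex \<Rightarrow> complex \<Rightarrow> (int \<Rightarrow> int \<Rightarrow> complex) \<Rightarrow> bool" where
  "solves h g \<alpha> p \<phi> \<longleftrightarrow>
     (\<forall>n m. \<phi> (n + 2) m + h n m * \<phi> (n + 1) m + \<alpha>\<^sup>2 * \<phi> n m = p\<^sup>2 * \<phi> n m
          \<and> \<phi> n (m + 1) = \<phi> (n + 1) m - g n m * \<phi> n m)"

end

theory Submission
  imports Defs
begin

text \<open>The two ways of computing \<open>\<phi>(n+2,m+1)\<close> differ by a linear form in the free data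
  with coefficients \<open>(p\<^sup>2 - \<alpha>\<^sup>2) x\<close> and \<open>y\<close>; since \<open>p\<close> is arbitrary, compatibility means that
  both coefficients vanish.  Eliminating \<open>h(n,m+1)\<close> between the two resulting identities gives the
  conservation law for \<open>(h(n,m) + g(n+1,m)) g(n,m)\<close>.  When this quantity is \<open>\<beta>\<^sup>2 - \<alpha>\<^sup>2\<close>,
  rewriting \<open>\<phi>(n,m+2)\<close> and \<open>\<phi>(n,m+1)\<close> through \<open>\<phi>(n,m)\<close>, \<open>\<phi>(n+1,m)\<close>, \<open>\<phi>(n+2,m)\<close> turns
  the second order equation in \<open>m\<close> into the one in \<open>n\<close>.\<close>

lemma hat_of_tt_minus_tt_of_hat:
  fixes h g :: "int \<Rightarrow> int \<Rightarrow> complex"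
  shows "hat_of_tt h g \<alpha> p n m x y - tt_of_hat h g \<alpha> p n m x y
     = (p\<^sup>2 - \<alpha>\<^sup>2) * x * (h (n + 1) m + g (n + 2) m - h n (m + 1) - g n m)
       + y * (h n (m + 1) * (h n m + g (n + 1) m) - (h (n + 1) m + g (n + 2) m) * h n m)"
  unfolding hat_of_tt_def tt_of_hat_def step_nn_def step_hat_def Let_def
  by (simp add: algebra_simps)

lemma compatible_iff:
  "compatible h g \<alpha> \<longleftrightarrow>
     (\<forall>n m. h n (m + 1) + g n m = h (n + 1) m + g (n + 2) m)
   \<and> (\<forall>n m. h n (m + 1) * (h n m + g (n + 1) m) = (h (n + 1) m + g (n + 2) m) * h n m)"
  (is "_ \<longleftrightarrow> (\<forall>n m. ?A n m) \<and> (\<forall>n m. ?B n m)")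
proof
  assume compat: "compatible h g \<alpha>"
  have difference_zero: "(p\<^sup>2 - \<alpha>\<^sup>2) * x * (h (n + 1) m + g (n + 2) m - h n (m + 1) - g n m)
       + y * (h n (m + 1) * (h n m + g (n + 1) m) - (h (n + 1) m + g (n + 2) m) * h n m) = 0"
    for p n m x y
    using compat hat_of_tt_minus_tt_of_hat[of h g \<alpha> p n m x y] by (simp add: compatible_def)
  have "?A n m" for n m
  proof -
    have "(csqrt (\<alpha>\<^sup>2 + 1))\<^sup>2 - \<alpha>\<^sup>2 = 1" by simp
    with difference_zero[where p = "csqrt (\<alpha>\<^sup>2 + 1)" and n = n and m = m and x = 1 and y = 0]
    show ?thesis
      by (simp add: algebra_simps)
  qed
  moreover have "?B n m" for n m
    using difference_zero[where p = \<alpha> and n = n and m = m and x = 0 and y = 1]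
    by (simp add: algebra_simps)
  ultimately show "(\<forall>n m. ?A n m) \<and> (\<forall>n m. ?B n m)" by blast
next
  assume "(\<forall>n m. ?A n m) \<and> (\<forall>n m. ?B n m)"
  then show "compatible h g \<alpha>"
    unfolding compatible_def
    using hat_of_tt_minus_tt_of_hat[of h g \<alpha>] by (simp add: algebra_simps)
qed

lemma compatible_conservation_law:
  assumes "compatible h g \<alpha>"
  shows "(h (n + 1) m + g (n + 2) m) * g (n + 1) m = (h n m + g (n + 1) m) * g n m"
proof -
  have "h n (m + 1) = h (n + 1) m + g (n + 2) m - g n m"
    and "h n (m + 1) * (h n m + g (n + 1) m) = (h (n + 1) m + g (n + 2) m) * h n m"
    using assms by (auto simp: compatible_iff eq_diff_eq)
  then have "(h (n + 1) m + g (n + 2) m - g n m) * (h n m + g (n + 1) m)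
      = (h (n + 1) m + g (n + 2) m) * h n m"
    by simp
  then show ?thesis by algebra
qed

lemma int_shift_invariant_eq:
  fixes F :: "int \<Rightarrow> 'a"
  assumes "\<And>n. F (n + 1) = F n"
  shows "F n = F 0"
proof (induction n rule: int_induct[where k = 0])
  case (step2 i)
  then show ?case using assms[of "i - 1"] by simp
qed (use assms in simp_all)

lemma solvesD:
  assumes "solves h g \<alpha> p \<phi>"
  shows "\<phi> (n + 2) m = (p\<^sup>2 - \<alpha>\<^sup>2) * \<phi> n m - h n m * \<phi> (n + 1) m"
    and "\<phi> n (m + 1) = \<phi> (n + 1) m - g n m * \<phi> n m"
proof -
  have "\<phi> (n + 2) m + h n m * \<phi> (n + 1) m + \<alpha>\<^sup>2 * \<phi> n m = p\<^sup>2 * \<phi> n m"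
    using assms unfolding solves_def by blast
  then show "\<phi> (n + 2) m = (p\<^sup>2 - \<alpha>\<^sup>2) * \<phi> n m - h n m * \<phi> (n + 1) m"
    by (simp add: algebra_simps eq_diff_eq)
  show "\<phi> n (m + 1) = \<phi> (n + 1) m - g n m * \<phi> n m"
    using assms unfolding solves_def by blast
qed

lemma solves_hat_equation:
  assumes "solves h g \<alpha> p \<phi>"
    and "(h n m + g (n + 1) m) * g n m = \<beta>\<^sup>2 - \<alpha>\<^sup>2"
  shows "\<phi> n (m + 2) + (h n m + g (n + 1) m + g n (m + 1)) * \<phi> n (m + 1) + \<beta>\<^sup>2 * \<phi> n m
       = p\<^sup>2 * \<phi> n m"
proof -
  have hat_hat: "\<phi> n (m + 2) = \<phi> (n + 1) (m + 1) - g n (m + 1) * \<phi> n (m + 1)"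
    using solvesD(2)[OF assms(1), of n "m + 1"] by (simp add: add.assoc)
  have tilde_hat: "\<phi> (n + 1) (m + 1) = \<phi> (n + 2) m - g (n + 1) m * \<phi> (n + 1) m"
    using solvesD(2)[OF assms(1), of "n + 1" m] by (simp add: add.assoc)
  have "\<beta>\<^sup>2 = (h n m + g (n + 1) m) * g n m + \<alpha>\<^sup>2"
    using assms(2) by (simp add: algebra_simps)
  then show ?thesis
    unfolding hat_hat tilde_hat solvesD[OF assms(1), of n m] by (simp add: algebra_simps)
qed

theorem proposition2p1:
  fixes h g :: "int \<Rightarrow> int \<Rightarrow> complex" and \<alpha> :: complex
  assumes "compatible h g \<alpha>"
  shows "(\<forall>n m. h n (m + 1) - h (n + 1) m = g (n + 2) m - g n m)
       \<and> (\<forall>n m. (h (n + 1) m + g (n + 2) m) * g (n + 1) m = (h n m + g (n + 1) m) * g n m)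
       \<and> (\<exists>\<beta> :: int \<Rightarrow> complex. \<forall>n m. (h n m + g (n + 1) m) * g n m = (\<beta> m)\<^sup>2 - \<alpha>\<^sup>2)
       \<and> (\<forall>(\<beta>::complex) p \<phi>.
            (\<forall>n m. (h n m + g (n + 1) m) * g n m = \<beta>\<^sup>2 - \<alpha>\<^sup>2) \<longrightarrow> solves h g \<alpha> p \<phi> \<longrightarrow>
            (\<forall>n m. \<phi> n (m + 2) + (h n m + g (n + 1) m + g n (m + 1)) * \<phi> n (m + 1)
                     + \<beta>\<^sup>2 * \<phi> n m = p\<^sup>2 * \<phi> n m))"
proof -
  have tilde_hat_balance: "h n (m + 1) + g n m = h (n + 1) m + g (n + 2) m" for n m
    using assms by (simp add: compatible_iff)
  have lattice_eq: "h n (m + 1) - h (n + 1) m = g (n + 2) m - g n m" for n m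
    using tilde_hat_balance[of n m] by (simp add: algebra_simps)
  have law: "(h (n + 1) m + g (n + 2) m) * g (n + 1) m = (h n m + g (n + 1) m) * g n m" for n m
    using assms by (rule compatible_conservation_law)
  have invariant: "(h n m + g (n + 1) m) * g n m = (h 0 m + g 1 m) * g 0 m" for n m
    using int_shift_invariant_eq[of "\<lambda>n. (h n m + g (n + 1) m) * g n m" n] law
    by (simp add: add.assoc)
  have "\<exists>\<beta> :: int \<Rightarrow> complex. \<forall>n m. (h n m + g (n + 1) m) * g n m = (\<beta> m)\<^sup>2 - \<alpha>\<^sup>2"
    by (rule exI[of _ "\<lambda>m. csqrt ((h 0 m + g 1 m) * g 0 m + \<alpha>\<^sup>2)"]) (simp add: invariant)
  with lattice_eq law solves_hat_equation show ?thesis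
    by blast
qed

end
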